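(* Let $\lambda_1(\varepsilon),\ldots,\lambda_n(\varepsilon)$ be real functions with $\lambda_k(\varepsilon)=\varepsilon^{L_k}(\widetilde\lambda_k+\mathcal{O}(\varepsilon))$ as $\varepsilon\to0$, for integers $0\le L_1\le\cdots\le L_n$, and let $e_j(\varepsilon)=e_j(\lambda_1(\varepsilon),\ldots,\lambda_n(\varepsilon))=\varepsilon^{L_1+\cdots+L_j}(\widetilde e_j+\mathcal{O}(\varepsilon))$. Set $L_0=-1$ and $L_{n+1}=+\infty$. Suppose that for some $s\ge0$ and $1\le m\le n-s$, \[L_s<L_{s+1}=\cdots=L_{s+m}<L_{s+m+1}.\] Then for $1\le k\le m$, \[\widetilde e_{s+k}=\begin{cases}e_k(\widetilde\lambda_{s+1},\ldots,\widetilde\lambda_{s+m}),& s=0,\\ \widetilde\lambda_1\cdots\widetilde\lambda_s\,e_k(\widetilde\lambda_{s+1},\ldots,\widetilde\lambda_{s+m})=\widetilde e_s\,e_k(\widetilde\lambda_{s+1},\ldots,\widetilde\lambda_{s+m}),& s>0.\end{cases}\] In particular, if $s>1$ and $\widetilde e_s\ne0$, then $e_k(\widetilde\lambda_{s+1},\ldots,\widetilde\lambda_{s+m})=\widetilde e_{s+k}/\widetilde e_s$ for $1\le k\le m$, hence $\widetilde\lambda_{s+1},\ldots,\widetilde\lambda_{s+m}$ are the roots of the polynomial $q(\lambda)=\sum_{j=0}^m(-1)^j\widetilde e_{s+j}\lambda^{m-j}$.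
   Context: The $k$-th elementary symmetric polynomial is $e_k(\mu_1,\ldots,\mu_m)=\sum_{\mathcal{Y}\subset\{1,\ldots,m\},\,\#\mathcal{Y}=k}\prod_{i\in\mathcal{Y}}\mu_i$. The constants $\widetilde e_j$ denote the main-term coefficients of $e_j(\varepsilon)$ as displayed. *)

theory Defs
  imports "HOL-Library.Landau_Symbols" "HOL-Computational_Algebra.Polynomial"
begin

definition esym :: "nat set \<Rightarrow> (nat \<Rightarrow> real) \<Rightarrow> nat \<Rightarrow> real" where
  "esym I mu k = (\<Sum>Y\<in>{Y. Y \<subseteq> I \<and> card Y = k}. \<Prod>i\<in>Y. mu i)"

end

theory Submission
  imports Defs
begin

(* Write e_j as the sum over j-element sets Y of the products of the lam_i, i in Y. Each product
   has leading term eps^(L(Y)) times the product of the lt_i, where L(Y) is the sum of L over Y.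
   By monotonicity L(Y) >= L_1 + ... + L_j, with equality exactly when Y contains every index with
   L_i < L_j and only indices with L_i <= L_j. Comparing leading coefficients therefore expresses
   et_j through the lt_i with L_i < L_j and an elementary symmetric function of the lt_i with
   L_i = L_j; at a block or at a gap of the sequence L this is the stated formula, and the
   polynomial identity is Vieta's formula. *)

definition has_leading_term :: "(real \<Rightarrow> real) \<Rightarrow> nat \<Rightarrow> real \<Rightarrow> bool" where
  "has_leading_term f d c \<longleftrightarrow> (\<lambda>x. f x - x ^ d * c) \<in> O[at 0](\<lambda>x. x ^ (d + 1))"

lemma power_bigo_power_at_0:
  assumes "b \<le> a"
  shows "(\<lambda>x::real. x ^ a) \<in> O[at 0](\<lambda>x. x ^ b)"
proof -
  have "(\<lambda>x::real. x ^ (a - b)) \<in> O[at 0](\<lambda>_. 1)"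
    by (rule bigoI_tendsto[where c = "0 ^ (a - b)"]) (auto intro!: tendsto_eq_intros)
  then have "(\<lambda>x::real. x ^ b * x ^ (a - b)) \<in> O[at 0](\<lambda>x. x ^ b)"
    by (rule landau_o.big_1_mult[OF landau_o.big_refl])
  with assms show ?thesis by (simp flip: power_add)
qed

lemma power_smallo_power_at_0: "(\<lambda>x::real. x ^ (d + 1)) \<in> o[at 0](\<lambda>x. x ^ d)"
proof -
  have "(\<lambda>x::real. x) \<in> o[at 0](\<lambda>_. 1)"
    by (rule smalloI_tendsto) (auto intro!: tendsto_eq_intros)
  then have "(\<lambda>x::real. x ^ d * x) \<in> o[at 0](\<lambda>x. x ^ d)"
    by (rule landau_o.small_1_mult''[OF landau_o.big_refl])
  then show ?thesis by (simp add: mult.commute)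
qed

lemma has_leading_term_bigo:
  assumes "has_leading_term f d c"
  shows "f \<in> O[at 0](\<lambda>x. x ^ d)"
proof -
  have "(\<lambda>x. f x - x ^ d * c) \<in> O[at 0](\<lambda>x. x ^ d)"
    using assms landau_o.big_trans[OF _ power_bigo_power_at_0[of d "d + 1"]]
    unfolding has_leading_term_def by simp
  moreover have "(\<lambda>x::real. x ^ d * c) \<in> O[at 0](\<lambda>x. x ^ d)"
    by (cases "c = 0") simp_all
  ultimately have "(\<lambda>x. (f x - x ^ d * c) + x ^ d * c) \<in> O[at 0](\<lambda>x. x ^ d)"
    by (rule sum_in_bigo)
  then show ?thesis by simp
qed

lemma has_leading_term_higher_degree:
  assumes "has_leading_term f d' c" "d < d'"
  shows "has_leading_term f d 0"
proof -
  have "f \<in> O[at 0](\<lambda>x. x ^ (d + 1))"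
    using assms(2) by (intro landau_o.big_trans[OF has_leading_term_bigo[OF assms(1)]]
      power_bigo_power_at_0) simp
  then show ?thesis by (simp add: has_leading_term_def)
qed

lemma has_leading_term_unique:
  assumes "has_leading_term f d a" "has_leading_term f d b"
  shows "a = b"
proof (rule ccontr)
  assume "a \<noteq> b"
  have "(\<lambda>x. (f x - x ^ d * b) - (f x - x ^ d * a)) \<in> O[at 0](\<lambda>x. x ^ (d + 1))"
    using assms unfolding has_leading_term_def by (rule sum_in_bigo(2)[rotated])
  then have "(\<lambda>x::real. x ^ d * (a - b)) \<in> O[at 0](\<lambda>x. x ^ (d + 1))"
    by (simp add: algebra_simps)
  with \<open>a \<noteq> b\<close> have "(\<lambda>x::real. x ^ d) \<in> o[at 0](\<lambda>x. x ^ d)"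
    using landau_o.big_small_trans[OF _ power_smallo_power_at_0] by simp
  then have "\<forall>\<^sub>F x in at (0::real). x ^ d = 0"
    by (simp add: landau_o.small_refl_iff)
  moreover have "\<forall>\<^sub>F x in at (0::real). x \<noteq> 0"
    by (simp add: eventually_at_filter)
  ultimately have "\<forall>\<^sub>F x in at (0::real). False"
    by eventually_elim simp
  then show False by simp
qed

lemma has_leading_term_add:
  assumes "has_leading_term f d a" "has_leading_term g d b"
  shows "has_leading_term (\<lambda>x. f x + g x) d (a + b)"
proof -
  have "(\<lambda>x. (f x - x ^ d * a) + (g x - x ^ d * b)) \<in> O[at 0](\<lambda>x. x ^ (d + 1))"
    using assms unfolding has_leading_term_def by (rule sum_in_bigo)
  then show ?thesis
    unfolding has_leading_term_def by (simp add: algebra_simps)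
qed

lemma has_leading_term_sum:
  assumes "\<And>i. i \<in> A \<Longrightarrow> has_leading_term (f i) d (c i)"
  shows "has_leading_term (\<lambda>x. \<Sum>i\<in>A. f i x) d (\<Sum>i\<in>A. c i)"
  using assms
proof (induction A rule: infinite_finite_induct)
  case (insert i A)
  then show ?case by (simp add: has_leading_term_add)
qed (simp_all add: has_leading_term_def)

lemma has_leading_term_mult:
  assumes f: "has_leading_term f a c" and g: "has_leading_term g b e"
  shows "has_leading_term (\<lambda>x. f x * g x) (a + b) (c * e)"
proof -
  have "(\<lambda>x. (f x - x ^ a * c) * g x) \<in> O[at 0](\<lambda>x. x ^ (a + 1) * x ^ b)"
    using f has_leading_term_bigo[OF g] unfolding has_leading_term_def by (rule landau_o.big.mult)
  moreover have "(\<lambda>x. x ^ a * c * (g x - x ^ b * e)) \<in> O[at 0](\<lambda>x. x ^ a * x ^ (b + 1))"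
    using g unfolding has_leading_term_def by (intro landau_o.big.mult) (cases "c = 0", simp_all)
  ultimately have "(\<lambda>x. (f x - x ^ a * c) * g x + x ^ a * c * (g x - x ^ b * e))
      \<in> O[at 0](\<lambda>x. x ^ (a + b + 1))"
    by (intro sum_in_bigo) (simp_all add: power_add mult_ac)
  then show ?thesis
    unfolding has_leading_term_def by (simp add: algebra_simps power_add)
qed

lemma has_leading_term_prod:
  assumes "\<And>i. i \<in> A \<Longrightarrow> has_leading_term (f i) (d i) (c i)"
  shows "has_leading_term (\<lambda>x. \<Prod>i\<in>A. f i x) (\<Sum>i\<in>A. d i) (\<Prod>i\<in>A. c i)"
  using assms
proof (induction A rule: infinite_finite_induct)
  case (insert i A)
  then show ?case by (simp add: has_leading_term_mult)
qed (simp_all add: has_leading_term_def)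

lemma sum_subset_eq_initial_segment_plus_excess:
  fixes L :: "nat \<Rightarrow> nat"
  assumes mono: "mono_on {1..n} L" and Y: "Y \<subseteq> {1..n}" "card Y = j"
  shows "sum L Y = sum L {1..j} + (\<Sum>y\<in>Y - {1..j}. L y - L j) + (\<Sum>x\<in>{1..j} - Y. L j - L x)"
proof (cases "j = 0")
  case True
  with Y show ?thesis by (auto dest: finite_subset)
next
  case False
  have "finite Y" using Y(1) finite_subset by blast
  have "j \<le> n" using card_mono[OF _ Y(1)] Y(2) by simp
  have above: "L j \<le> L y" if "y \<in> Y - {1..j}" for y
    using that Y(1) False by (intro mono_onD[OF mono]) auto
  have below: "L x \<le> L j" if "x \<in> {1..j} - Y" for x
    using that \<open>j \<le> n\<close> by (intro mono_onD[OF mono]) auto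
  have card_eq: "card (Y - {1..j}) = card ({1..j} - Y)"
    using \<open>finite Y\<close> Y(2) by (simp add: card_Diff_subset_Int Int_commute)
  have "sum L Y = sum L (Y \<inter> {1..j}) + sum L (Y - {1..j})"
    using \<open>finite Y\<close> by (metis add.commute sum.Int_Diff)
  moreover have "sum L {1..j} = sum L (Y \<inter> {1..j}) + sum L ({1..j} - Y)"
    by (metis Int_commute add.commute finite_atLeastAtMost sum.Int_Diff)
  moreover have "sum L (Y - {1..j}) = (\<Sum>y\<in>Y - {1..j}. (L y - L j) + L j)"
    using above by (intro sum.cong) auto
  moreover have "(\<Sum>x\<in>{1..j} - Y. L x + (L j - L x)) = card ({1..j} - Y) * L j"
    using below by simp
  ultimately show ?thesis using card_eq by (simp add: sum.distrib)
qed

lemma sum_initial_segment_le: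
  fixes L :: "nat \<Rightarrow> nat"
  assumes "mono_on {1..n} L" "Y \<subseteq> {1..n}" "card Y = j"
  shows "sum L {1..j} \<le> sum L Y"
  by (subst sum_subset_eq_initial_segment_plus_excess[OF assms]) simp

lemma sum_eq_initial_segment_iff:
  fixes L :: "nat \<Rightarrow> nat"
  assumes mono: "mono_on {1..n} L" and Y: "Y \<subseteq> {1..n}" "card Y = j" and "1 \<le> j"
  shows "sum L Y = sum L {1..j} \<longleftrightarrow>
    {i\<in>{1..n}. L i < L j} \<subseteq> Y \<and> Y \<subseteq> {i\<in>{1..n}. L i \<le> L j}"
proof -
  have "finite Y" using Y(1) finite_subset by blast
  have "j \<le> n" using card_mono[OF _ Y(1)] Y(2) by simp
  have "sum L Y = sum L {1..j} \<longleftrightarrow>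
      (\<forall>y\<in>Y - {1..j}. L y \<le> L j) \<and> (\<forall>x\<in>{1..j} - Y. L j \<le> L x)"
    using \<open>finite Y\<close> by (subst sum_subset_eq_initial_segment_plus_excess[OF assms(1-3)]) auto
  also have "(\<forall>y\<in>Y - {1..j}. L y \<le> L j) \<longleftrightarrow> Y \<subseteq> {i\<in>{1..n}. L i \<le> L j}"
  proof
    assume above_le: "\<forall>y\<in>Y - {1..j}. L y \<le> L j"
    show "Y \<subseteq> {i\<in>{1..n}. L i \<le> L j}"
    proof
      fix y assume "y \<in> Y"
      with Y(1) have "y \<in> {1..n}" by blast
      moreover have "L y \<le> L j"
      proof (cases "y \<le> j")
        case True
        with \<open>y \<in> {1..n}\<close> \<open>j \<le> n\<close> show ?thesis by (intro mono_onD[OF mono]) auto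
      qed (use above_le \<open>y \<in> Y\<close> in auto)
      ultimately show "y \<in> {i\<in>{1..n}. L i \<le> L j}" by blast
    qed
  qed auto
  also have "(\<forall>x\<in>{1..j} - Y. L j \<le> L x) \<longleftrightarrow> {i\<in>{1..n}. L i < L j} \<subseteq> Y"
  proof
    assume "\<forall>x\<in>{1..j} - Y. L j \<le> L x"
    moreover have "i \<le> j" if "i \<in> {1..n}" "L i < L j" for i
      using that mono_onD[OF mono, of j i] \<open>1 \<le> j\<close> by (cases "j \<le> i") auto
    ultimately show "{i\<in>{1..n}. L i < L j} \<subseteq> Y" by force
  qed (use \<open>j \<le> n\<close> in force)
  finally show ?thesis by blast
qed

lemma esym_0: "finite I \<Longrightarrow> esym I x 0 = 1"
proof -
  assume "finite I"
  then have "{Y. Y \<subseteq> I \<and> card Y = 0} = {{}}" by (auto dest: finite_subset)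
  then show ?thesis by (simp add: esym_def)
qed

lemma esym_card: "finite I \<Longrightarrow> esym I x (card I) = (\<Prod>i\<in>I. x i)"
proof -
  assume "finite I"
  then have "{Y. Y \<subseteq> I \<and> card Y = card I} = {I}" by (auto dest: card_subset_eq)
  then show ?thesis by (simp add: esym_def)
qed

lemma sum_prod_subsets_between:
  assumes "A \<subseteq> B" "finite B" "card A \<le> j"
  shows "(\<Sum>Y\<in>{Y. A \<subseteq> Y \<and> Y \<subseteq> B \<and> card Y = j}. \<Prod>i\<in>Y. x i)
    = (\<Prod>i\<in>A. x i) * esym (B - A) x (j - card A)"
proof -
  have "finite A" using assms finite_subset by blast
  have "(\<Sum>Y\<in>{Y. A \<subseteq> Y \<and> Y \<subseteq> B \<and> card Y = j}. \<Prod>i\<in>Y. x i)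
      = (\<Sum>Z\<in>{Z. Z \<subseteq> B - A \<and> card Z = j - card A}. \<Prod>i\<in>A \<union> Z. x i)"
  proof (rule sum.reindex_bij_witness[where i = "\<lambda>Z. A \<union> Z" and j = "\<lambda>Y. Y - A"])
    fix Y assume "Y \<in> {Y. A \<subseteq> Y \<and> Y \<subseteq> B \<and> card Y = j}"
    with \<open>finite A\<close> show "A \<union> (Y - A) = Y" "Y - A \<in> {Z. Z \<subseteq> B - A \<and> card Z = j - card A}"
      by (auto simp: card_Diff_subset)
  next
    fix Z assume Z: "Z \<in> {Z. Z \<subseteq> B - A \<and> card Z = j - card A}"
    then have "finite Z" "A \<inter> Z = {}" using \<open>finite B\<close> finite_subset by auto
    with Z assms show "A \<union> Z - A = Z" "A \<union> Z \<in> {Y. A \<subseteq> Y \<and> Y \<subseteq> B \<and> card Y = j}"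
      using \<open>finite A\<close> by (auto simp: card_Un_disjoint)
  qed (simp add: Un_absorb1)
  also have "\<dots> = (\<Sum>Z\<in>{Z. Z \<subseteq> B - A \<and> card Z = j - card A}. (\<Prod>i\<in>A. x i) * (\<Prod>i\<in>Z. x i))"
    using \<open>finite A\<close> \<open>finite B\<close>
    by (intro sum.cong refl prod.union_disjoint) (auto dest: finite_subset)
  finally show ?thesis by (simp add: esym_def sum_distrib_left)
qed

lemma prod_linear_factors_esym:
  fixes x :: "nat \<Rightarrow> real"
  assumes "finite I"
  shows "(\<Prod>i\<in>I. [:- x i, 1:]) = (\<Sum>j\<le>card I. monom ((-1) ^ j * esym I x j) (card I - j))"
proof -
  have "(\<Prod>i\<in>I. [:- x i, 1:]) = (\<Prod>i\<in>I. [:- x i:] + [:0, 1:])" by simp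
  also have "\<dots> = (\<Sum>X\<in>Pow I. (\<Prod>i\<in>X. [:- x i:]) * [:0, 1:] ^ card (I - X))"
    using prod_add[OF assms, of "\<lambda>i. [:- x i:]" "\<lambda>_. [:0, 1:]"] by simp
  also have "\<dots> = (\<Sum>X\<in>Pow I. monom ((-1) ^ card X * (\<Prod>i\<in>X. x i)) (card I - card X))"
  proof (intro sum.cong refl)
    fix X assume "X \<in> Pow I"
    with assms have "card (I - X) = card I - card X"
      by (auto intro: card_Diff_subset finite_subset)
    then show "(\<Prod>i\<in>X. [:- x i:]) * [:0, 1:] ^ card (I - X)
        = monom ((-1) ^ card X * (\<Prod>i\<in>X. x i)) (card I - card X)"
      by (simp add: prod_to_poly prod_uminus monom_altdef)
  qed
  also have "\<dots> = (\<Sum>j\<le>card I. \<Sum>X\<in>{X \<in> Pow I. card X = j}.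
      monom ((-1) ^ card X * (\<Prod>i\<in>X. x i)) (card I - card X))"
    using assms by (intro sum.group[symmetric]) (auto intro: card_mono)
  also have "\<dots> = (\<Sum>j\<le>card I. monom ((-1) ^ j * esym I x j) (card I - j))"
    by (intro sum.cong refl)
      (simp add: esym_def monom_sum sum_distrib_left Pow_def conj_commute)
  finally show ?thesis .
qed

lemma has_leading_term_sum_lowest:
  assumes "finite I"
    and "\<And>i. i \<in> I \<Longrightarrow> has_leading_term (f i) (d i) (c i)"
    and "\<And>i. i \<in> I \<Longrightarrow> D \<le> d i"
  shows "has_leading_term (\<lambda>x. \<Sum>i\<in>I. f i x) D (\<Sum>i\<in>{i\<in>I. d i = D}. c i)"
proof -
  have "has_leading_term (f i) D (if d i = D then c i else 0)" if "i \<in> I" for i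
  proof (cases "d i = D")
    case False
    with assms(3)[OF that] have "D < d i" by simp
    with assms(2)[OF that] show ?thesis
      using False by (simp add: has_leading_term_higher_degree)
  qed (use assms(2)[OF that] in simp)
  then have "has_leading_term (\<lambda>x. \<Sum>i\<in>I. f i x) D (\<Sum>i\<in>I. if d i = D then c i else 0)"
    by (rule has_leading_term_sum)
  with assms(1) show ?thesis by (simp add: sum.inter_filter)
qed

lemma card_strict_lower_level_set_less:
  fixes L :: "nat \<Rightarrow> nat"
  assumes mono: "mono_on {1..n} L" and j: "j \<in> {1..n}"
  shows "card {i\<in>{1..n}. L i < L j} < j"
proof -
  have "i < j" if "i \<in> {1..n}" "L i < L j" for i
    using that j mono_onD[OF mono, of j i] by (cases "j \<le> i") auto
  then have "{i\<in>{1..n}. L i < L j} \<subseteq> {1..<j}"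
    by auto
  then have "card {i\<in>{1..n}. L i < L j} \<le> card {1..<j}"
    by (rule card_mono[rotated]) simp
  also have "\<dots> < j"
    using j by simp
  finally show ?thesis .
qed

lemma has_leading_term_esym:
  fixes L :: "nat \<Rightarrow> nat" and lam :: "nat \<Rightarrow> real \<Rightarrow> real"
  assumes mono: "mono_on {1..n} L"
    and lam: "\<And>k. k \<in> {1..n} \<Longrightarrow> has_leading_term (lam k) (L k) (lt k)"
    and j: "j \<in> {1..n}"
  defines "A \<equiv> {i\<in>{1..n}. L i < L j}" and "B \<equiv> {i\<in>{1..n}. L i \<le> L j}"
  shows "has_leading_term (\<lambda>x. esym {1..n} (\<lambda>i. lam i x) j) (\<Sum>i=1..j. L i)
    ((\<Prod>i\<in>A. lt i) * esym (B - A) lt (j - card A))"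
proof -
  let ?U = "{Y. Y \<subseteq> {1..n} \<and> card Y = j}"
  have "finite ?U"
    by (rule finite_subset[of _ "Pow {1..n}"]) auto
  moreover have "has_leading_term (\<lambda>x. \<Prod>i\<in>Y. lam i x) (sum L Y) (\<Prod>i\<in>Y. lt i)"
    if "Y \<in> ?U" for Y
    using that lam by (intro has_leading_term_prod) auto
  moreover have "sum L {1..j} \<le> sum L Y" if "Y \<in> ?U" for Y
    using that sum_initial_segment_le[OF mono] by blast
  ultimately have lead: "has_leading_term (\<lambda>x. esym {1..n} (\<lambda>i. lam i x) j) (sum L {1..j})
      (\<Sum>Y\<in>{Y\<in>?U. sum L Y = sum L {1..j}}. \<Prod>i\<in>Y. lt i)"
    unfolding esym_def by (rule has_leading_term_sum_lowest)
  have lowest: "{Y\<in>?U. sum L Y = sum L {1..j}} = {Y. A \<subseteq> Y \<and> Y \<subseteq> B \<and> card Y = j}"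
  proof (rule set_eqI)
    fix Y
    show "Y \<in> {Y\<in>?U. sum L Y = sum L {1..j}} \<longleftrightarrow> Y \<in> {Y. A \<subseteq> Y \<and> Y \<subseteq> B \<and> card Y = j}"
    proof
      assume "Y \<in> {Y\<in>?U. sum L Y = sum L {1..j}}"
      then show "Y \<in> {Y. A \<subseteq> Y \<and> Y \<subseteq> B \<and> card Y = j}"
        using sum_eq_initial_segment_iff[OF mono, of Y j] j unfolding A_def B_def by simp
    next
      assume "Y \<in> {Y. A \<subseteq> Y \<and> Y \<subseteq> B \<and> card Y = j}"
      moreover from this have "Y \<subseteq> {1..n}"
        unfolding B_def by blast
      ultimately show "Y \<in> {Y\<in>?U. sum L Y = sum L {1..j}}"
        using sum_eq_initial_segment_iff[OF mono, of Y j] j unfolding A_def B_def by simp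
    qed
  qed
  have "card A \<le> j"
    using card_strict_lower_level_set_less[OF mono j] unfolding A_def by simp
  then have "(\<Sum>Y\<in>{Y. A \<subseteq> Y \<and> Y \<subseteq> B \<and> card Y = j}. \<Prod>i\<in>Y. lt i)
      = (\<Prod>i\<in>A. lt i) * esym (B - A) lt (j - card A)"
    by (intro sum_prod_subsets_between) (auto simp: A_def B_def)
  with lead lowest show ?thesis
    by simp
qed

lemma strict_lower_level_set_eq_initial_segment:
  fixes L :: "nat \<Rightarrow> nat"
  assumes mono: "mono_on {1..n} L" and gap: "t = 0 \<or> L t < L (t + 1)"
    and j: "t < j" "j \<le> n" "L j = L (t + 1)"
  shows "{i\<in>{1..n}. L i < L j} = {1..t}"
proof (intro equalityI subsetI)
  fix i assume i: "i \<in> {i\<in>{1..n}. L i < L j}"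
  have "i \<le> t"
  proof (rule ccontr)
    assume "\<not> i \<le> t"
    then have "L (t + 1) \<le> L i"
      using i by (intro mono_onD[OF mono]) auto
    with i j(3) show False by simp
  qed
  with i show "i \<in> {1..t}" by simp
next
  fix i assume i: "i \<in> {1..t}"
  then have "L i \<le> L t"
    using j by (intro mono_onD[OF mono]) auto
  also have "L t < L j"
    using gap i j(3) by auto
  finally show "i \<in> {i\<in>{1..n}. L i < L j}"
    using i j by simp
qed

lemma lower_level_set_eq_initial_segment:
  fixes L :: "nat \<Rightarrow> nat"
  assumes mono: "mono_on {1..n} L" and gap: "p = n \<or> L p < L (p + 1)"
    and j: "1 \<le> j" "j \<le> p" "p \<le> n" "L j = L p"
  shows "{i\<in>{1..n}. L i \<le> L j} = {1..p}"
proof (intro equalityI subsetI)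
  fix i assume i: "i \<in> {i\<in>{1..n}. L i \<le> L j}"
  have "i \<le> p"
  proof (rule ccontr)
    assume "\<not> i \<le> p"
    then have "L (p + 1) \<le> L i"
      using i by (intro mono_onD[OF mono]) auto
    moreover have "L p < L (p + 1)"
      using gap \<open>\<not> i \<le> p\<close> i by auto
    ultimately show False
      using i j(4) by simp
  qed
  with i show "i \<in> {1..p}" by simp
next
  fix i assume "i \<in> {1..p}"
  with j show "i \<in> {i\<in>{1..n}. L i \<le> L j}"
    by (auto intro: mono_onD[OF mono])
qed

locale esym_leading_terms =
  fixes n :: nat and lam :: "nat \<Rightarrow> real \<Rightarrow> real" and L :: "nat \<Rightarrow> nat"
    and lt et :: "nat \<Rightarrow> real"
  assumes mono_L: "mono_on {1..n} L"
    and lam_lead: "\<And>k. k \<in> {1..n} \<Longrightarrow> has_leading_term (lam k) (L k) (lt k)"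
    and esym_lead: "\<And>j. j \<in> {1..n} \<Longrightarrow>
      has_leading_term (\<lambda>x. esym {1..n} (\<lambda>i. lam i x) j) (\<Sum>i=1..j. L i) (et j)"
begin

lemma et_eq_level_sets:
  assumes "j \<in> {1..n}"
  defines "A \<equiv> {i\<in>{1..n}. L i < L j}" and "B \<equiv> {i\<in>{1..n}. L i \<le> L j}"
  shows "et j = (\<Prod>i\<in>A. lt i) * esym (B - A) lt (j - card A)"
  unfolding A_def B_def
  using esym_lead[OF assms(1)] has_leading_term_esym[OF mono_L lam_lead assms(1)]
  by (rule has_leading_term_unique)

lemma et_in_block:
  assumes gap_left: "t = 0 \<or> L t < L (t + 1)" and gap_right: "p = n \<or> L p < L (p + 1)"
    and block: "\<And>i. i \<in> {t+1..p} \<Longrightarrow> L i = L (t + 1)"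
    and j: "t < j" "j \<le> p" "p \<le> n"
  shows "et j = (\<Prod>i=1..t. lt i) * esym {t+1..p} lt (j - t)"
proof -
  have Lj: "L j = L (t + 1)" and Lp: "L p = L (t + 1)"
    using j by (intro block; simp)+
  have "{i\<in>{1..n}. L i < L j} = {1..t}"
    using j Lj by (intro strict_lower_level_set_eq_initial_segment[OF mono_L gap_left]) auto
  moreover have "{i\<in>{1..n}. L i \<le> L j} = {1..p}"
    using j Lj Lp by (intro lower_level_set_eq_initial_segment[OF mono_L gap_right]) auto
  moreover have "{1..p} - {1..t} = {t+1..p}"
    by auto
  ultimately show ?thesis
    using et_eq_level_sets[of j] j by simp
qed

lemma et_at_gap:
  assumes j: "j \<in> {1..n}" and gap: "j = n \<or> L j < L (j + 1)"
  shows "et j = (\<Prod>i=1..j. lt i)"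
proof -
  define A where "A = {i\<in>{1..n}. L i < L j}"
  have B: "{i\<in>{1..n}. L i \<le> L j} = {1..j}"
    using j by (intro lower_level_set_eq_initial_segment[OF mono_L gap]) auto
  have "A \<subseteq> {1..j}"
    unfolding A_def B[symmetric] by auto
  moreover have "finite A"
    unfolding A_def by simp
  ultimately have "j - card A = card ({1..j} - A)"
    by (simp add: card_Diff_subset)
  have "et j = (\<Prod>i\<in>A. lt i) * esym ({1..j} - A) lt (j - card A)"
    using et_eq_level_sets[OF j] unfolding B A_def[symmetric] .
  also have "\<dots> = (\<Prod>i\<in>A. lt i) * (\<Prod>i\<in>{1..j} - A. lt i)"
    unfolding \<open>j - card A = card ({1..j} - A)\<close> by (simp add: esym_card)
  also have "\<dots> = (\<Prod>i=1..j. lt i)"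
    using prod.subset_diff[OF \<open>A \<subseteq> {1..j}\<close>, of lt] by (simp add: mult.commute)
  finally show ?thesis .
qed

end

lemma sum_monom_scaled_esym:
  fixes x :: "nat \<Rightarrow> real"
  assumes "finite I" and e: "\<And>j. j \<le> card I \<Longrightarrow> e j = c * esym I x j"
  shows "(\<Sum>j\<le>card I. monom ((-1) ^ j * e j) (card I - j)) = smult c (\<Prod>i\<in>I. [:- x i, 1:])"
proof -
  have "smult c (\<Prod>i\<in>I. [:- x i, 1:]) = [:c:] * (\<Sum>j\<le>card I. monom ((-1) ^ j * esym I x j) (card I - j))"
    using prod_linear_factors_esym[OF assms(1)] by simp
  also have "\<dots> = (\<Sum>j\<le>card I. monom ((-1) ^ j * e j) (card I - j))"
    by (simp add: sum_distrib_left smult_monom e mult_ac)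
  finally show ?thesis by simp
qed

theorem lemma3p4:
  fixes n s m :: nat
    and lam :: "nat \<Rightarrow> real \<Rightarrow> real"
    and L :: "nat \<Rightarrow> nat"
    and lt :: "nat \<Rightarrow> real"
    and et :: "nat \<Rightarrow> real"
  assumes L_mono: "\<And>i j. 1 \<le> i \<Longrightarrow> i \<le> j \<Longrightarrow> j \<le> n \<Longrightarrow> L i \<le> L j"
    and lam_asym: "\<And>k. 1 \<le> k \<Longrightarrow> k \<le> n \<Longrightarrow>
        (\<lambda>\<epsilon>. lam k \<epsilon> - \<epsilon> ^ L k * lt k) \<in> O[at 0](\<lambda>\<epsilon>. \<epsilon> ^ (L k + 1))"
    and e_asym: "\<And>j. 1 \<le> j \<Longrightarrow> j \<le> n \<Longrightarrow>
        (\<lambda>\<epsilon>. esym {1..n} (\<lambda>i. lam i \<epsilon>) j - \<epsilon> ^ (\<Sum>i=1..j. L i) * et j)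
          \<in> O[at 0](\<lambda>\<epsilon>. \<epsilon> ^ ((\<Sum>i=1..j. L i) + 1))"
    and m_pos: "1 \<le> m" and sm_le: "s + m \<le> n"
    and gap_left: "s = 0 \<or> L s < L (s + 1)"
    and block: "\<And>i. s + 1 \<le> i \<Longrightarrow> i \<le> s + m \<Longrightarrow> L i = L (s + 1)"
    and gap_right: "s + m = n \<or> L (s + m) < L (s + m + 1)"
  shows "(\<forall>k\<in>{1..m}.
            et (s + k) = (\<Prod>i=1..s. lt i) * esym {s+1..s+m} lt k \<and>
            (s > 0 \<longrightarrow> et (s + k) = et s * esym {s+1..s+m} lt k))
       \<and> ((s > 1 \<and> et s \<noteq> 0) \<longrightarrow>
            (\<forall>k\<in>{1..m}. esym {s+1..s+m} lt k = et (s + k) / et s) \<and>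
            (\<Sum>j\<le>m. monom ((-1) ^ j * et (s + j)) (m - j))
              = smult (et s) (\<Prod>i=s+1..s+m. [:- lt i, 1:]))"
proof -
  interpret esym_leading_terms n lam L lt et
    using L_mono lam_asym e_asym
    by unfold_locales (auto simp: has_leading_term_def intro: mono_onI)
  have block_interval: "\<And>i. i \<in> {s+1..s+m} \<Longrightarrow> L i = L (s + 1)"
    by (rule block) auto
  have block_coeff: "et (s + k) = (\<Prod>i=1..s. lt i) * esym {s+1..s+m} lt k"
    if "k \<in> {1..m}" for k
    using et_in_block[OF gap_left gap_right block_interval, of "s + k"] that sm_le by simp
  have gap_coeff: "et s = (\<Prod>i=1..s. lt i)" if "s > 0"
    using et_at_gap[of s] gap_left that sm_le by auto
  have scaled: "et (s + k) = et s * esym {s+1..s+m} lt k" if "s > 0" "k \<le> m" for k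
    using block_coeff[of k] gap_coeff that by (cases "k = 0") (auto simp: esym_0)
  show ?thesis
  proof (intro conjI impI ballI)
    show "\<And>k. k \<in> {1..m} \<Longrightarrow> et (s + k) = (\<Prod>i=1..s. lt i) * esym {s+1..s+m} lt k"
      by (rule block_coeff)
    show "\<And>k. k \<in> {1..m} \<Longrightarrow> s > 0 \<Longrightarrow> et (s + k) = et s * esym {s+1..s+m} lt k"
      using scaled by simp
    assume "s > 1 \<and> et s \<noteq> 0"
    then show "\<And>k. k \<in> {1..m} \<Longrightarrow> esym {s+1..s+m} lt k = et (s + k) / et s"
      using scaled by simp
    show "(\<Sum>j\<le>m. monom ((-1) ^ j * et (s + j)) (m - j))
        = smult (et s) (\<Prod>i=s+1..s+m. [:- lt i, 1:])"
      using sum_monom_scaled_esym[of "{s+1..s+m}" "\<lambda>j. et (s + j)" "et s" lt] scaled \<open>s > 1 \<and> et s \<noteq> 0\<close>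
      by simp
  qed
qed

end
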